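(* Let $\mathcal{R}_1,\mathcal{R}_2$ be finite consistent sets of probabilistic constraints over propositional languages $\mathcal{L}_1,\mathcal{L}_2$ respectively, with $\mathrm{sig}(\mathcal{L}_1)\cap\mathrm{sig}(\mathcal{L}_2)=\emptyset$, and let $\mathcal{R}=\mathcal{R}_1\cup\mathcal{R}_2$, viewed over the language $\mathcal{L}$ with $\mathrm{sig}(\mathcal{L})=\mathrm{sig}(\mathcal{L}_1)\cup\mathrm{sig}(\mathcal{L}_2)$. Identifying $\mathrm{Int}(\mathcal{L})$ with $\mathrm{Int}(\mathcal{L}_1)\times\mathrm{Int}(\mathcal{L}_2)$, we have $P^{ME}_{\mathcal{R}}(v_1,v_2)=P^{ME}_{\mathcal{R}_1}(v_1)\cdot P^{ME}_{\mathcal{R}_2}(v_2)$ for all $v_1,v_2$. In particular, the marginals satisfy $P^{ME}_{\mathcal{R}}(v_i)=P^{ME}_{\mathcal{R}_i}(v_i)$ for all $v_i\in\mathrm{Int}(\mathcal{L}_i)$, $i\in\{1,2\}$.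
   Context: For a propositional language $\mathcal{L}$ over a finite set $\mathrm{sig}(\mathcal{L})$ of variables, $\mathrm{Int}(\mathcal{L})$ is the set of truth assignments. A probability distribution over $\mathcal{L}$ is $P:\mathrm{Int}(\mathcal{L})\to[0,1]$ summing to $1$, with $P(\phi)=\sum_{v\models\phi}P(v)$. A probabilistic constraint over $\mathcal{L}$ is $c_0+\sum_{i=1}^k c_i\,\mathsf{p}(\phi_i)\ge 0$ ($c_i\in\mathbb{R}$, $\phi_i\in\mathcal{L}$), satisfied by $P$ iff $c_0+\sum_ic_iP(\phi_i)\ge0$; $\mathrm{Mod}(\mathcal{R})$ is the set of distributions satisfying all constraints of $\mathcal{R}$, and $\mathcal{R}$ is consistent iff this set is nonempty; then $P^{ME}_{\mathcal{R}}$ is the unique element of $\mathrm{Mod}(\mathcal{R})$ maximizing the entropy $H(P)=-\sum_vP(v)\log P(v)$. *)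

theory Defs
  imports Complex_Main
begin

datatype 'a form = Var 'a | Neg "'a form" | Conj "'a form" "'a form" | Disj "'a form" "'a form"

fun fvars :: "'a form \<Rightarrow> 'a set" where
  "fvars (Var x) = {x}"
| "fvars (Neg f) = fvars f"
| "fvars (Conj f g) = fvars f \<union> fvars g"
| "fvars (Disj f g) = fvars f \<union> fvars g"

text \<open>A truth assignment over signature S is represented by the set of variables it
  makes true, so Int(L) = Pow S.\<close>
fun models :: "'a set \<Rightarrow> 'a form \<Rightarrow> bool" where
  "models v (Var x) = (x \<in> v)"
| "models v (Neg f) = (\<not> models v f)"
| "models v (Conj f g) = (models v f \<and> models v g)"
| "models v (Disj f g) = (models v f \<or> models v g)"

text \<open>Probability distributions over the language with signature S
  (extended by 0 outside Int(L), so that they are determined as functions).\<close>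
definition is_dist :: "'a set \<Rightarrow> ('a set \<Rightarrow> real) \<Rightarrow> bool" where
  "is_dist S P \<longleftrightarrow> (\<forall>v\<in>Pow S. 0 \<le> P v) \<and> (\<forall>v. v \<notin> Pow S \<longrightarrow> P v = 0)
     \<and> (\<Sum>v\<in>Pow S. P v) = 1"

definition prob :: "'a set \<Rightarrow> ('a set \<Rightarrow> real) \<Rightarrow> 'a form \<Rightarrow> real" where
  "prob S P f = (\<Sum>v\<in>{v\<in>Pow S. models v f}. P v)"

text \<open>A probabilistic constraint c0 + sum_i c_i p(phi_i) >= 0 is a pair (c0, [(c1,phi1),...]).\<close>
type_synonym 'a pconstr = "real \<times> (real \<times> 'a form) list"

definition constr_over :: "'a set \<Rightarrow> 'a pconstr \<Rightarrow> bool" where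
  "constr_over S c \<longleftrightarrow> (\<forall>(ci, f)\<in>set (snd c). fvars f \<subseteq> S)"

definition sat_constr :: "'a set \<Rightarrow> ('a set \<Rightarrow> real) \<Rightarrow> 'a pconstr \<Rightarrow> bool" where
  "sat_constr S P c \<longleftrightarrow> 0 \<le> fst c + (\<Sum>(ci, f)\<leftarrow>snd c. ci * prob S P f)"

definition Mod :: "'a set \<Rightarrow> 'a pconstr set \<Rightarrow> ('a set \<Rightarrow> real) set" where
  "Mod S R = {P. is_dist S P \<and> (\<forall>c\<in>R. sat_constr S P c)}"

definition entropy :: "'a set \<Rightarrow> ('a set \<Rightarrow> real) \<Rightarrow> real" where
  "entropy S P = - (\<Sum>v\<in>Pow S. P v * ln (P v))"

text \<open>The maximum entropy model (unique for consistent R).\<close>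
definition ME :: "'a set \<Rightarrow> 'a pconstr set \<Rightarrow> ('a set \<Rightarrow> real)" where
  "ME S R = (THE P. P \<in> Mod S R \<and> (\<forall>Q\<in>Mod S R. entropy S Q \<le> entropy S P))"

end

theory Submission
  imports Defs "HOL-Analysis.Analysis" "HOL-Real_Asymp.Real_Asymp"
begin

text \<open>
  Let \<open>P\<^sub>1, P\<^sub>2\<close> be the maximum entropy models of \<open>R\<^sub>1, R\<^sub>2\<close> and \<open>P = P\<^sub>1 \<times> P\<^sub>2\<close> their
  product. Since every constraint of \<open>R\<^sub>i\<close> only mentions variables of \<open>S\<^sub>i\<close>, a distribution
  over \<open>S\<^sub>1 \<union> S\<^sub>2\<close> satisfies \<open>R\<^sub>1 \<union> R\<^sub>2\<close> iff its two marginals satisfy \<open>R\<^sub>1\<close> and \<open>R\<^sub>2\<close>;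
  in particular \<open>P\<close> does. Entropy is subadditive, \<open>H(Q) \<le> H(Q\<^sub>1) + H(Q\<^sub>2)\<close> (Gibbs'
  inequality applied to \<open>Q\<close> and \<open>Q\<^sub>1 \<times> Q\<^sub>2\<close>), and additive on products, so
  \<open>H(Q) \<le> H(P\<^sub>1) + H(P\<^sub>2) = H(P)\<close> for every model \<open>Q\<close>. Hence \<open>P\<close> is the maximum entropy
  model of \<open>R\<^sub>1 \<union> R\<^sub>2\<close>, whose existence and uniqueness follow from compactness of the
  model set and strict concavity of entropy.
\<close>

definition marginal :: "'a set \<Rightarrow> 'a set \<Rightarrow> ('a set \<Rightarrow> real) \<Rightarrow> ('a set \<Rightarrow> real)" where
  "marginal A B Q = (\<lambda>v. if v \<in> Pow A then (\<Sum>w\<in>Pow B. Q (v \<union> w)) else 0)"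

definition product_dist ::
    "'a set \<Rightarrow> 'a set \<Rightarrow> ('a set \<Rightarrow> real) \<Rightarrow> ('a set \<Rightarrow> real) \<Rightarrow> ('a set \<Rightarrow> real)" where
  "product_dist A B P1 P2 = (\<lambda>v. if v \<in> Pow (A \<union> B) then P1 (v \<inter> A) * P2 (v \<inter> B) else 0)"

lemma sum_Pow_Un_disjoint:
  assumes "finite A" "finite B" "A \<inter> B = {}"
  shows "(\<Sum>v\<in>Pow (A \<union> B). g v) = (\<Sum>v\<in>Pow A. \<Sum>w\<in>Pow B. g (v \<union> w))"
proof -
  have "bij_betw (\<lambda>(v, w). v \<union> w) (Pow A \<times> Pow B) (Pow (A \<union> B))"
    by (rule bij_betwI[where g = "\<lambda>u. (u \<inter> A, u \<inter> B)"]) (use assms(3) in auto)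
  then have "(\<Sum>v\<in>Pow (A \<union> B). g v) = (\<Sum>(v, w)\<in>Pow A \<times> Pow B. g (v \<union> w))"
    by (simp add: sum.reindex_bij_betw[symmetric] split_def)
  then show ?thesis
    by (simp add: sum.cartesian_product)
qed

lemma models_cong: "v \<inter> fvars f = w \<inter> fvars f \<Longrightarrow> models v f = models w f"
  by (induction f) (force simp: set_eq_iff)+

lemma prob_eq_sum_if: "finite S \<Longrightarrow> prob S P f = (\<Sum>v\<in>Pow S. if models v f then P v else 0)"
  unfolding prob_def by (rule sum.inter_filter) simp

subsection \<open>Marginals and products\<close>

lemma prob_marginal:
  assumes "finite A" "finite B" "A \<inter> B = {}" "fvars f \<subseteq> A"
  shows "prob (A \<union> B) Q f = prob A (marginal A B Q) f"
proof -
  have "prob (A \<union> B) Q f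
      = (\<Sum>v\<in>Pow A. \<Sum>w\<in>Pow B. if models (v \<union> w) f then Q (v \<union> w) else 0)"
    using assms by (simp add: prob_eq_sum_if sum_Pow_Un_disjoint)
  also have "\<dots> = (\<Sum>v\<in>Pow A. if models v f then marginal A B Q v else 0)"
  proof (rule sum.cong[OF refl])
    fix v assume v: "v \<in> Pow A"
    have "models (v \<union> w) f = models v f" if "w \<in> Pow B" for w
      using assms(3,4) v that by (intro models_cong) blast
    then show "(\<Sum>w\<in>Pow B. if models (v \<union> w) f then Q (v \<union> w) else 0)
        = (if models v f then marginal A B Q v else 0)"
      using v by (cases "models v f") (simp_all add: marginal_def)
  qed
  also have "\<dots> = prob A (marginal A B Q) f"
    using assms by (simp add: prob_eq_sum_if)
  finally show ?thesis .
qed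

lemma sat_constr_marginal:
  assumes "finite A" "finite B" "A \<inter> B = {}" "constr_over A c"
  shows "sat_constr (A \<union> B) Q c \<longleftrightarrow> sat_constr A (marginal A B Q) c"
proof -
  have "map (\<lambda>(ci, f). ci * prob (A \<union> B) Q f) (snd c)
      = map (\<lambda>(ci, f). ci * prob A (marginal A B Q) f) (snd c)"
    using assms(4) unfolding constr_over_def
    by (intro map_cong refl) (auto simp: prob_marginal[OF assms(1-3)])
  then show ?thesis
    unfolding sat_constr_def by (rule arg_cong[where f = "\<lambda>x. 0 \<le> fst c + sum_list x"])
qed

lemma is_dist_marginal:
  assumes "finite A" "finite B" "A \<inter> B = {}" "is_dist (A \<union> B) Q"
  shows "is_dist A (marginal A B Q)"
  using assms sum_Pow_Un_disjoint[OF assms(1-3), of Q]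
  by (auto simp: is_dist_def marginal_def intro!: sum_nonneg)

lemma marginal_le:
  assumes "finite B" "is_dist (A \<union> B) Q" "v \<in> Pow A" "w \<in> Pow B"
  shows "Q (v \<union> w) \<le> marginal A B Q v"
  using assms unfolding marginal_def is_dist_def
  by (auto intro!: member_le_sum[where f = "\<lambda>w. Q (v \<union> w)"])

lemma Mod_Un_iff:
  assumes "finite A" "finite B" "A \<inter> B = {}"
    and "\<forall>c\<in>R1. constr_over A c" "\<forall>c\<in>R2. constr_over B c"
  shows "Q \<in> Mod (A \<union> B) (R1 \<union> R2) \<longleftrightarrow>
    is_dist (A \<union> B) Q \<and> marginal A B Q \<in> Mod A R1 \<and> marginal B A Q \<in> Mod B R2"
proof -
  have BA: "B \<inter> A = {}" "B \<union> A = A \<union> B"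
    using assms(3) by blast+
  have "is_dist (A \<union> B) Q \<Longrightarrow> is_dist A (marginal A B Q) \<and> is_dist B (marginal B A Q)"
    using is_dist_marginal[OF assms(1-3)] is_dist_marginal[OF assms(2,1) BA(1)] BA(2) by simp
  moreover have "sat_constr (A \<union> B) Q c \<longleftrightarrow> sat_constr A (marginal A B Q) c" if "c \<in> R1" for c
    using sat_constr_marginal[OF assms(1-3)] assms(4) that by blast
  moreover have "sat_constr (A \<union> B) Q c \<longleftrightarrow> sat_constr B (marginal B A Q) c" if "c \<in> R2" for c
    using sat_constr_marginal[OF assms(2,1) BA(1)] assms(5) that BA(2) by metis
  ultimately show ?thesis
    unfolding Mod_def by blast
qed

lemma product_dist_Un:
  assumes "A \<inter> B = {}" "v \<in> Pow A" "w \<in> Pow B"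
  shows "product_dist A B P1 P2 (v \<union> w) = P1 v * P2 w"
proof -
  have "(v \<union> w) \<inter> A = v" "(v \<union> w) \<inter> B = w"
    using assms by blast+
  then show ?thesis
    using assms(2,3) by (auto simp: product_dist_def)
qed

lemma product_dist_commute: "product_dist A B P1 P2 = product_dist B A P2 P1"
  by (simp add: product_dist_def fun_eq_iff Un_commute mult.commute)

lemma is_dist_product_dist:
  assumes "finite A" "finite B" "A \<inter> B = {}" "is_dist A P1" "is_dist B P2"
  shows "is_dist (A \<union> B) (product_dist A B P1 P2)"
proof -
  have "(\<Sum>v\<in>Pow (A \<union> B). product_dist A B P1 P2 v) = (\<Sum>v\<in>Pow A. \<Sum>w\<in>Pow B. P1 v * P2 w)"
    by (simp add: sum_Pow_Un_disjoint[OF assms(1-3)] product_dist_Un[OF assms(3)])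
  also have "\<dots> = 1"
    using assms(4,5) by (simp add: sum_product[symmetric] is_dist_def)
  finally show ?thesis
    using assms(4,5) by (auto simp: is_dist_def product_dist_def)
qed

lemma marginal_product_dist:
  assumes "A \<inter> B = {}" "is_dist A P1" "is_dist B P2"
  shows "marginal A B (product_dist A B P1 P2) = P1"
proof
  fix v
  show "marginal A B (product_dist A B P1 P2) v = P1 v"
  proof (cases "v \<in> Pow A")
    case True
    then have "marginal A B (product_dist A B P1 P2) v = P1 v * (\<Sum>w\<in>Pow B. P2 w)"
      by (simp add: marginal_def product_dist_Un[OF assms(1)] sum_distrib_left)
    then show ?thesis
      using assms(3) by (simp add: is_dist_def)
  qed (use assms(2) in \<open>simp add: marginal_def is_dist_def\<close>)
qed

subsection \<open>Entropy of marginals and products\<close>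

lemma xlnx_ge_tangent_strict:
  fixes a m :: real
  assumes "0 \<le> a" "0 < m" "a \<noteq> m"
  shows "a - m < a * ln a - a * ln m"
proof (cases "a = 0")
  case False
  then have a: "0 < a"
    using assms(1) by simp
  have "ln (m / a) \<noteq> m / a - 1"
    using ln_eq_minus_one[of "m / a"] a assms(2,3) by auto
  then have "ln m - ln a < m / a - 1"
    using ln_le_minus_one[of "m / a"] a assms(2) by (simp add: ln_div)
  then have "a * (ln m - ln a) < a * (m / a - 1)"
    using a by simp
  then show ?thesis
    using a by (simp add: algebra_simps)
qed (use assms in simp)

lemma xlnx_ge_tangent:
  fixes a m :: real
  assumes "0 \<le> a" "0 < m"
  shows "a - m \<le> a * ln a - a * ln m"
  using xlnx_ge_tangent_strict[OF assms] by (cases "a = m") auto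

lemma gibbs_product_term:
  fixes q a b :: real
  assumes "0 \<le> q" "q \<le> a" "q \<le> b"
  shows "q - a * b \<le> q * ln q - q * ln a - q * ln b"
proof (cases "q = 0")
  case False
  then have "0 < a" "0 < b"
    using assms by auto
  then show ?thesis
    using xlnx_ge_tangent[OF assms(1), of "a * b"] by (simp add: ln_mult algebra_simps)
qed (use assms in simp)

lemma entropy_marginal:
  "entropy A (marginal A B Q)
    = - (\<Sum>v\<in>Pow A. \<Sum>w\<in>Pow B. Q (v \<union> w) * ln (marginal A B Q v))"
  unfolding entropy_def
  by (rule arg_cong[where f = uminus], rule sum.cong[OF refl])
     (simp add: marginal_def sum_distrib_right)

lemma entropy_subadditive:
  assumes "finite A" "finite B" "A \<inter> B = {}" "is_dist (A \<union> B) Q"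
  shows "entropy (A \<union> B) Q \<le> entropy A (marginal A B Q) + entropy B (marginal B A Q)"
proof -
  let ?Q1 = "marginal A B Q" and ?Q2 = "marginal B A Q"
  have BA: "B \<inter> A = {}" "B \<union> A = A \<union> B"
    using assms(3) by blast+
  have dist2: "is_dist (B \<union> A) Q"
    using assms(4) BA(2) by simp
  have Q1: "sum ?Q1 (Pow A) = 1" and Q2: "sum ?Q2 (Pow B) = 1"
    using is_dist_marginal[OF assms] is_dist_marginal[OF assms(2,1) BA(1) dist2]
    by (simp_all add: is_dist_def)
  have H1: "entropy A ?Q1 = - (\<Sum>v\<in>Pow A. \<Sum>w\<in>Pow B. Q (v \<union> w) * ln (?Q1 v))"
    by (rule entropy_marginal)
  have H2: "entropy B ?Q2 = - (\<Sum>v\<in>Pow A. \<Sum>w\<in>Pow B. Q (v \<union> w) * ln (?Q2 w))"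
    using entropy_marginal[of B A Q] by (simp add: sum.swap[where A = "Pow B"] Un_commute)
  have "(\<Sum>v\<in>Pow A. \<Sum>w\<in>Pow B. Q (v \<union> w)) = 1"
    using assms(4) sum_Pow_Un_disjoint[OF assms(1-3), of Q] by (simp add: is_dist_def)
  moreover have "(\<Sum>v\<in>Pow A. \<Sum>w\<in>Pow B. ?Q1 v * ?Q2 w) = 1"
    using Q1 Q2 by (simp add: sum_product[symmetric])
  ultimately have "0 = (\<Sum>v\<in>Pow A. \<Sum>w\<in>Pow B. Q (v \<union> w) - ?Q1 v * ?Q2 w)"
    by (simp add: sum_subtractf)
  also have "\<dots> \<le> (\<Sum>v\<in>Pow A. \<Sum>w\<in>Pow B.
      Q (v \<union> w) * ln (Q (v \<union> w)) - Q (v \<union> w) * ln (?Q1 v) - Q (v \<union> w) * ln (?Q2 w))"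
  proof (intro sum_mono gibbs_product_term)
    fix v w assume "v \<in> Pow A" "w \<in> Pow B"
    then show "0 \<le> Q (v \<union> w)" "Q (v \<union> w) \<le> ?Q1 v" "Q (v \<union> w) \<le> ?Q2 w"
      using assms marginal_le[OF assms(2,4)] marginal_le[OF assms(1) dist2, of w v]
      by (auto simp: is_dist_def Un_commute)
  qed
  finally show ?thesis
    unfolding H1 H2
    by (simp add: entropy_def sum_Pow_Un_disjoint[OF assms(1-3)] sum_subtractf)
qed

lemma xlnx_mult:
  fixes a b :: real
  assumes "0 \<le> a" "0 \<le> b"
  shows "(a * b) * ln (a * b) = b * (a * ln a) + a * (b * ln b)"
  using assms by (cases "a = 0 \<or> b = 0") (auto simp: ln_mult algebra_simps)

lemma entropy_product_dist:
  assumes "finite A" "finite B" "A \<inter> B = {}" "is_dist A P1" "is_dist B P2"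
  shows "entropy (A \<union> B) (product_dist A B P1 P2) = entropy A P1 + entropy B P2"
proof -
  have sums: "sum P1 (Pow A) = 1" "sum P2 (Pow B) = 1"
    using assms(4,5) by (auto simp: is_dist_def)
  have "(\<Sum>v\<in>Pow (A \<union> B). product_dist A B P1 P2 v * ln (product_dist A B P1 P2 v))
      = (\<Sum>v\<in>Pow A. \<Sum>w\<in>Pow B. P2 w * (P1 v * ln (P1 v)) + P1 v * (P2 w * ln (P2 w)))"
    using assms(4,5)
    by (auto simp: sum_Pow_Un_disjoint[OF assms(1-3)] product_dist_Un[OF assms(3)]
        is_dist_def xlnx_mult intro!: sum.cong)
  also have "\<dots> = (\<Sum>v\<in>Pow A. P1 v * ln (P1 v)) + (\<Sum>w\<in>Pow B. P2 w * ln (P2 w))"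
    using sums by (simp add: sum.distrib sum_distrib_left[symmetric] sum_distrib_right[symmetric])
  finally show ?thesis
    by (simp add: entropy_def)
qed

subsection \<open>Existence and uniqueness of the maximum entropy model\<close>

lemma continuous_on_xlnx: "continuous_on {0..} (\<lambda>x::real. x * ln x)"
proof -
  have "((\<lambda>x::real. x * ln x) \<longlongrightarrow> 0) (at_right 0)"
    by real_asymp
  then have "continuous (at 0 within {0::real..}) (\<lambda>x. x * ln x)"
    by (simp add: continuous_within at_within_Ici_at_right)
  moreover have "continuous (at x within {0..}) (\<lambda>x. x * ln x)" if "0 < x" for x :: real
    using that by (intro continuous_intros) auto
  ultimately show ?thesis
    by (auto simp: continuous_on_eq_continuous_within order_le_less)
qed

lemma continuous_on_sat_constr_sum:
  "continuous_on UNIV (\<lambda>P. \<Sum>(ci, f)\<leftarrow>xs. ci * prob S P f)"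
  unfolding prob_def
  by (induction xs) (auto intro!: continuous_intros continuous_on_product_coordinates)

lemma closed_Mod: "closed (Mod S R)"
proof -
  have "Mod S R = (\<Inter>v\<in>Pow S. {P. 0 \<le> P v}) \<inter> (\<Inter>v\<in>- Pow S. {P. P v = 0})
      \<inter> {P. (\<Sum>v\<in>Pow S. P v) = 1} \<inter> (\<Inter>c\<in>R. {P. sat_constr S P c})"
    by (auto simp: Mod_def is_dist_def)
  moreover have "closed {P. sat_constr S P c}" for c
    unfolding sat_constr_def by (intro closed_Collect_le continuous_intros continuous_on_sat_constr_sum)
  ultimately show ?thesis
    by (auto intro!: closed_Int closed_INT closed_Collect_le closed_Collect_eq
        continuous_on_sum continuous_on_product_coordinates continuous_intros)
qed

lemma compact_Mod:
  assumes "finite S"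
  shows "compact (Mod S R)"
proof -
  define K where "K = (\<lambda>v::'a set. if v \<in> Pow S then {0..1::real} else {0})"
  have "compactin (product_topology (\<lambda>_. euclidean) UNIV) (PiE UNIV K)"
    unfolding compactin_PiE by (auto simp: K_def)
  then have "compact (PiE UNIV K)"
    by (simp add: euclidean_product_topology)
  moreover have "Mod S R \<subseteq> PiE UNIV K"
  proof
    fix P assume "P \<in> Mod S R"
    then have d: "is_dist S P"
      by (simp add: Mod_def)
    have "P v \<le> 1" if "v \<in> Pow S" for v
      using d that assms member_le_sum[of v "Pow S" P] by (auto simp: is_dist_def)
    then show "P \<in> PiE UNIV K"
      using d by (auto simp: K_def is_dist_def)
  qed
  ultimately show ?thesis
    using closed_Mod by (metis compact_Int_closed inf.absorb_iff2)
qed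

lemma continuous_on_entropy: "continuous_on (Mod S R) (entropy S)"
proof -
  have "continuous_on (Mod S R) (\<lambda>P. P v * ln (P v))" if "v \<in> Pow S" for v
    using that
    by (intro continuous_on_compose2[OF continuous_on_xlnx, of _ "\<lambda>P. P v"]
        continuous_on_subset[OF continuous_on_product_coordinates])
       (auto simp: Mod_def is_dist_def)
  then show ?thesis
    unfolding entropy_def by (intro continuous_on_minus continuous_on_sum) auto
qed

lemma midpoint_in_Mod:
  assumes "P \<in> Mod S R" "P' \<in> Mod S R"
  shows "(\<lambda>v. (P v + P' v) / 2) \<in> Mod S R"
proof -
  have prob_mid: "prob S (\<lambda>v. (P v + P' v) / 2) f = (prob S P f + prob S P' f) / 2" for f
    unfolding prob_def by (simp add: sum.distrib sum_divide_distrib[symmetric])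
  have sum_mid: "(\<Sum>(ci, f)\<leftarrow>xs. ci * ((g f + h f) / 2))
      = ((\<Sum>(ci, f)\<leftarrow>xs. ci * g f) + (\<Sum>(ci, f)\<leftarrow>xs. ci * h f)) / 2"
    for xs :: "(real \<times> 'a form) list" and g h :: "'a form \<Rightarrow> real"
    by (induction xs) (auto simp: field_simps)
  have "sat_constr S (\<lambda>v. (P v + P' v) / 2) c" if "c \<in> R" for c
  proof -
    have "0 \<le> fst c + (\<Sum>(ci, f)\<leftarrow>snd c. ci * prob S P f)"
      "0 \<le> fst c + (\<Sum>(ci, f)\<leftarrow>snd c. ci * prob S P' f)"
      using assms that by (auto simp: Mod_def sat_constr_def)
    then show ?thesis
      unfolding sat_constr_def prob_mid sum_mid by (simp add: field_simps)
  qed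
  then show ?thesis
    using assms by (auto simp: Mod_def is_dist_def sum.distrib sum_divide_distrib[symmetric])
qed

lemma xlnx_midpoint_less:
  fixes a b :: real
  assumes "0 \<le> a" "0 \<le> b" "a \<noteq> b"
  shows "((a + b) / 2) * ln ((a + b) / 2) < (a * ln a + b * ln b) / 2"
proof -
  let ?m = "(a + b) / 2"
  have m: "0 < ?m"
    using assms by auto
  have "(a - ?m) + (b - ?m) < (a * ln a - a * ln ?m) + (b * ln b - b * ln ?m)"
    using xlnx_ge_tangent_strict[OF assms(1) m] xlnx_ge_tangent[OF assms(2) m] assms(3)
    by (intro add_less_le_mono) auto
  then show ?thesis
    by (simp add: field_simps)
qed

lemma xlnx_midpoint_le:
  fixes a b :: real
  assumes "0 \<le> a" "0 \<le> b"
  shows "((a + b) / 2) * ln ((a + b) / 2) \<le> (a * ln a + b * ln b) / 2"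
  using xlnx_midpoint_less[OF assms] by (cases "a = b") auto

lemma ex1_max_entropy:
  assumes "finite S" "Mod S R \<noteq> {}"
  shows "\<exists>!P. P \<in> Mod S R \<and> (\<forall>Q\<in>Mod S R. entropy S Q \<le> entropy S P)"
proof (rule ex_ex1I)
  show "\<exists>P. P \<in> Mod S R \<and> (\<forall>Q\<in>Mod S R. entropy S Q \<le> entropy S P)"
    using continuous_attains_sup[OF compact_Mod[OF assms(1)] assms(2) continuous_on_entropy]
    by blast
next
  fix P P'
  assume P: "P \<in> Mod S R \<and> (\<forall>Q\<in>Mod S R. entropy S Q \<le> entropy S P)"
    and P': "P' \<in> Mod S R \<and> (\<forall>Q\<in>Mod S R. entropy S Q \<le> entropy S P')"
  show "P = P'"
  proof (rule ccontr)
    assume "P \<noteq> P'"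
    let ?M = "\<lambda>v. (P v + P' v) / 2"
    have dist: "is_dist S P" "is_dist S P'"
      using P P' by (auto simp: Mod_def)
    then obtain v where v: "v \<in> Pow S" "P v \<noteq> P' v"
      using \<open>P \<noteq> P'\<close> unfolding is_dist_def fun_eq_iff by metis
    have "?M x * ln (?M x) \<le> (P x * ln (P x) + P' x * ln (P' x)) / 2" if "x \<in> Pow S" for x
      using dist that by (intro xlnx_midpoint_le) (auto simp: is_dist_def)
    moreover have "?M v * ln (?M v) < (P v * ln (P v) + P' v * ln (P' v)) / 2"
      using dist v by (intro xlnx_midpoint_less) (auto simp: is_dist_def)
    ultimately have "(\<Sum>v\<in>Pow S. ?M v * ln (?M v))
        < (\<Sum>v\<in>Pow S. (P v * ln (P v) + P' v * ln (P' v)) / 2)"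
      using assms(1) v(1) by (intro sum_strict_mono_ex1) auto
    then have "(entropy S P + entropy S P') / 2 < entropy S ?M"
      unfolding entropy_def by (simp add: sum.distrib sum_divide_distrib[symmetric])
    moreover have "entropy S ?M \<le> entropy S P" "entropy S P' \<le> entropy S P"
      "entropy S P \<le> entropy S P'"
      using P P' midpoint_in_Mod by blast+
    ultimately show False
      by simp
  qed
qed

lemma ME_maximal:
  assumes "finite S" "Mod S R \<noteq> {}"
  shows "ME S R \<in> Mod S R" "\<forall>Q\<in>Mod S R. entropy S Q \<le> entropy S (ME S R)"
  using theI'[OF ex1_max_entropy[OF assms]] unfolding ME_def by auto

lemma ME_eqI:
  assumes "finite S" "P \<in> Mod S R" "\<forall>Q\<in>Mod S R. entropy S Q \<le> entropy S P"
  shows "ME S R = P"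
  unfolding ME_def using assms ex1_max_entropy[of S R] by (intro the1_equality) auto

lemma ME_Un_eq_product_dist:
  assumes "finite A" "finite B" "A \<inter> B = {}"
    and "\<forall>c\<in>R1. constr_over A c" "\<forall>c\<in>R2. constr_over B c"
    and "Mod A R1 \<noteq> {}" "Mod B R2 \<noteq> {}"
  shows "ME (A \<union> B) (R1 \<union> R2) = product_dist A B (ME A R1) (ME B R2)"
proof (rule ME_eqI)
  let ?P1 = "ME A R1" and ?P2 = "ME B R2"
  let ?P = "product_dist A B ?P1 ?P2"
  have BA: "B \<inter> A = {}"
    using assms(3) by blast
  have M1: "?P1 \<in> Mod A R1" "\<forall>Q\<in>Mod A R1. entropy A Q \<le> entropy A ?P1"
    and M2: "?P2 \<in> Mod B R2" "\<forall>Q\<in>Mod B R2. entropy B Q \<le> entropy B ?P2"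
    using ME_maximal[OF assms(1,6)] ME_maximal[OF assms(2,7)] by auto
  then have dist: "is_dist A ?P1" "is_dist B ?P2"
    by (auto simp: Mod_def)
  have marginals: "marginal A B ?P = ?P1" "marginal B A ?P = ?P2"
    using marginal_product_dist[OF assms(3) dist] marginal_product_dist[OF BA dist(2,1)]
    by (simp_all add: product_dist_commute[of B])
  show "finite (A \<union> B)"
    using assms(1,2) by simp
  show "?P \<in> Mod (A \<union> B) (R1 \<union> R2)"
    using Mod_Un_iff[OF assms(1-5)] is_dist_product_dist[OF assms(1-3) dist] marginals M1 M2
    by simp
  show "\<forall>Q\<in>Mod (A \<union> B) (R1 \<union> R2). entropy (A \<union> B) Q \<le> entropy (A \<union> B) ?P"
  proof
    fix Q assume "Q \<in> Mod (A \<union> B) (R1 \<union> R2)"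
    then have Q: "is_dist (A \<union> B) Q" "marginal A B Q \<in> Mod A R1" "marginal B A Q \<in> Mod B R2"
      using Mod_Un_iff[OF assms(1-5)] by auto
    have "entropy (A \<union> B) Q \<le> entropy A (marginal A B Q) + entropy B (marginal B A Q)"
      by (rule entropy_subadditive[OF assms(1-3) Q(1)])
    also have "\<dots> \<le> entropy A ?P1 + entropy B ?P2"
      using M1(2) M2(2) Q(2,3) by (intro add_mono) auto
    also have "\<dots> = entropy (A \<union> B) ?P"
      by (rule entropy_product_dist[OF assms(1-3) dist, symmetric])
    finally show "entropy (A \<union> B) Q \<le> entropy (A \<union> B) ?P" .
  qed
qed

theorem lemma2:
  fixes S1 S2 :: "'a set" and R1 R2 :: "'a pconstr set"
  assumes "finite S1" and "finite S2" and "S1 \<inter> S2 = {}"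
    and "finite R1" and "finite R2"
    and "\<forall>c\<in>R1. constr_over S1 c" and "\<forall>c\<in>R2. constr_over S2 c"
    and "Mod S1 R1 \<noteq> {}" and "Mod S2 R2 \<noteq> {}"
  shows "(\<forall>v1\<in>Pow S1. \<forall>v2\<in>Pow S2.
            ME (S1 \<union> S2) (R1 \<union> R2) (v1 \<union> v2) = ME S1 R1 v1 * ME S2 R2 v2)
       \<and> (\<forall>v1\<in>Pow S1. (\<Sum>v2\<in>Pow S2. ME (S1 \<union> S2) (R1 \<union> R2) (v1 \<union> v2)) = ME S1 R1 v1)
       \<and> (\<forall>v2\<in>Pow S2. (\<Sum>v1\<in>Pow S1. ME (S1 \<union> S2) (R1 \<union> R2) (v1 \<union> v2)) = ME S2 R2 v2)"
proof -
  have ME: "ME (S1 \<union> S2) (R1 \<union> R2) = product_dist S1 S2 (ME S1 R1) (ME S2 R2)"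
    using ME_Un_eq_product_dist assms by blast
  have sums: "sum (ME S1 R1) (Pow S1) = 1" "sum (ME S2 R2) (Pow S2) = 1"
    using ME_maximal(1)[OF assms(1,8)] ME_maximal(1)[OF assms(2,9)]
    by (auto simp: Mod_def is_dist_def)
  show ?thesis
    using sums
    by (simp add: ME product_dist_Un[OF assms(3)] sum_distrib_left[symmetric]
        sum_distrib_right[symmetric])
qed

end
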